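(* Let $A^\star\in\mathbb{R}^{n\times n}$, $B^\star\in\mathbb{R}^{n\times m}$, $C^\star\in\mathbb{R}^{p\times n}$ with $(A^\star,C^\star)$ observable with observability index $\ell^\star$, let data be generated as in the context and assume $\Delta_{10}\Delta_{10}^\top\preceq\Theta$. Then: $\Psi_0\Psi_0^\top\succ\Theta_{22}$ implies $\operatorname{rank}S_0=(p+m)\ell^\star$; $\operatorname{rank}S_0=(p+m)\ell^\star$ implies $\operatorname{rank}\mathcal{O}_{\ell^\star}=p\ell^\star$; and $\operatorname{rank}\mathcal{O}_{\ell^\star}=p\ell^\star$ implies $p\ell^\star=n$.
   Context: Let $\ell=\ell^\star$; $\mathcal{O}_\ell=[C^\star;C^\star A^\star;\dots;C^\star{A^\star}^{\ell-1}]\in\mathbb{R}^{p\ell\times n}$. Data: for $k=0,\dots,T$ ($T\ge\ell$), $x(k+1)=A^\star x(k)+B^\star u(k)$, $y(k)=C^\star x(k)$ from some $x(0)$; $u^{\mathrm m}=u+d^u$, $y^{\mathrm m}=y+d^y$. Matrices with columns $j=0,\dots,T-\ell$: column $j$ of $\Psi_0$ is $(y^{\mathrm m}(j),\dots,y^{\mathrm m}(j+\ell-1),u^{\mathrm m}(j),\dots,u^{\mathrm m}(j+\ell-1))$; of $S_0$ is $(y(j),\dots,y(j+\ell-1),u(j),\dots,u(j+\ell-1))$ (noise-free data); of $\Delta_{10}$ is $(d^y(j+\ell),d^y(j),\dots,d^y(j+\ell-1),d^u(j),\dots,d^u(j+\ell-1))$. $\Theta=\Theta^\top\succeq0$ of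 size $p+p\ell+m\ell$ is given, partitioned as $\begin{bmatrix}\Theta_{11}&\Theta_{12}\\\Theta_{12}^\top&\Theta_{22}\end{bmatrix}$ with $\Theta_{11}\in\mathbb{R}^{p\times p}$. *)

theory Defs
  imports "Jordan_Normal_Form.DL_Rank"
begin

definition mrank :: "real mat \<Rightarrow> nat" where
  "mrank M = vec_space.rank (dim_row M) M"

definition psd :: "real mat \<Rightarrow> bool" where
  "psd M \<longleftrightarrow> dim_row M = dim_col M \<and>
     (\<forall>v \<in> carrier_vec (dim_row M). v \<bullet> (M *\<^sub>v v) \<ge> 0)"

definition pd :: "real mat \<Rightarrow> bool" where
  "pd M \<longleftrightarrow> dim_row M = dim_col M \<and>
     (\<forall>v \<in> carrier_vec (dim_row M). v \<noteq> 0\<^sub>v (dim_row M) \<longrightarrow> v \<bullet> (M *\<^sub>v v) > 0)"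

definition loewner_le :: "real mat \<Rightarrow> real mat \<Rightarrow> bool" where
  "loewner_le X Y \<longleftrightarrow> dim_row X = dim_row Y \<and> dim_col X = dim_col Y \<and> psd (Y - X)"

definition loewner_gt :: "real mat \<Rightarrow> real mat \<Rightarrow> bool" where
  "loewner_gt X Y \<longleftrightarrow> dim_row X = dim_row Y \<and> dim_col X = dim_col Y \<and> pd (X - Y)"

(* observability matrix O_l = [C; C A; ...; C A^(l-1)], size (p*l) x n *)
definition obs_mat :: "real mat \<Rightarrow> real mat \<Rightarrow> nat \<Rightarrow> real mat" where
  "obs_mat A C l = mat (dim_row C * l) (dim_col A)
     (\<lambda>(i, j). (C * (A ^\<^sub>m (i div dim_row C))) $$ (i mod dim_row C, j))"

definition observable :: "real mat \<Rightarrow> real mat \<Rightarrow> bool" where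
  "observable A C \<longleftrightarrow> mrank (obs_mat A C (dim_row A)) = dim_row A"

definition obs_index :: "real mat \<Rightarrow> real mat \<Rightarrow> nat" where
  "obs_index A C = (LEAST l. mrank (obs_mat A C l) = dim_row A)"

(* Hankel-type data matrix with columns j = 0..T-l:
   (y(j),...,y(j+l-1), u(j),...,u(j+l-1)), y in R^p, u in R^m *)
definition data_mat :: "nat \<Rightarrow> nat \<Rightarrow> nat \<Rightarrow> nat \<Rightarrow> (nat \<Rightarrow> real vec) \<Rightarrow> (nat \<Rightarrow> real vec) \<Rightarrow> real mat" where
  "data_mat p m l T y u = mat (p * l + m * l) (T - l + 1)
     (\<lambda>(i, j). if i < p * l then y (j + i div p) $ (i mod p)
               else u (j + (i - p * l) div m) $ ((i - p * l) mod m))"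

(* Delta_10: columns (dy(j+l), dy(j),...,dy(j+l-1), du(j),...,du(j+l-1)) *)
definition noise_mat :: "nat \<Rightarrow> nat \<Rightarrow> nat \<Rightarrow> nat \<Rightarrow> (nat \<Rightarrow> real vec) \<Rightarrow> (nat \<Rightarrow> real vec) \<Rightarrow> real mat" where
  "noise_mat p m l T dy du = mat (p + p * l + m * l) (T - l + 1)
     (\<lambda>(i, j). if i < p then dy (j + l) $ i
               else data_mat p m l T dy du $$ (i - p, j))"

definition block22 :: "nat \<Rightarrow> real mat \<Rightarrow> real mat" where
  "block22 p Th = mat (dim_row Th - p) (dim_col Th - p) (\<lambda>(i, j). Th $$ (i + p, j + p))"

end

theory Submission
  imports Defs
begin

(* Write Psi0 = S0 + D, where D is Delta_10 without its first block row. Then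
   Delta_10 Delta_10^T <= Theta gives D D^T <= Theta_22, and if S0^T v = 0 then
   v^T Psi0 Psi0^T v = |D^T v|^2 <= v^T Theta_22 v; so Psi0 Psi0^T > Theta_22 forces S0 to
   have full row rank (p + m) l.
   Column j of S0 is the image of (x(j), u(j), ..., u(j+l-1)) under the fixed matrix
   [[O_l, T_l], [0, I]], with T_l the Toeplitz matrix of Markov parameters, so
   rank S0 <= n + m l, and full row rank gives p l <= n. Finally rank O_l = n by the choice
   of l = l*, while rank O_l <= p l. *)

lemma (in vec_space) rank_mult_le:
  assumes M: "M \<in> carrier_mat n k" and N: "N \<in> carrier_mat k c"
  shows "rank (M * N) \<le> rank M"
proof -
  define W where "W = span (set (cols M))"
  have cols_M: "set (cols M) \<subseteq> carrier_vec n" using M cols_dim by blast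
  have cols_MN: "set (cols (M * N)) \<subseteq> carrier_vec n" using M N cols_dim by (metis carrier_matD(1) mult_carrier_mat)
  have "set (cols (M * N)) \<subseteq> W"
  proof
    fix v assume "v \<in> set (cols (M * N))"
    then obtain j where j: "j < c" and "v = col (M * N) j"
      using M N by (auto simp: in_set_conv_nth simp del: col_mult2)
    then have "v = M *\<^sub>v col N j" using col_mult2[OF M N j] by simp
    then show "v \<in> W" unfolding W_def col_space_def[symmetric] col_space_eq[OF M]
      using M N j by (auto intro!: bexI[of _ "col N j"])
  qed
  then have span_MN: "span (set (cols (M * N))) \<subseteq> W"
    using W_def cols_M span_is_subspace span_is_subset by auto
  have W: "subspace class_ring W V" unfolding W_def using cols_M span_is_subspace by auto
  have "subspace class_ring (span (set (cols (M * N)))) (vs W)"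
    by (rule nested_subspaces[OF W]) (use cols_MN span_is_subspace span_MN in auto)
  moreover have "vectorspace.fin_dim class_ring (vs W)" unfolding W_def using fin_dim_span_cols[OF M] .
  moreover have "vectorspace.fin_dim class_ring (span_vs (set (cols (M * N))))"
    using fin_dim_span_cols M N by (metis mult_carrier_mat)
  ultimately show ?thesis unfolding rank_def W_def[symmetric]
    using vectorspace.subspace_dim[OF subspace_is_vs[OF W]] by auto
qed

lemma (in vec_space) rank_le_nr:
  assumes M: "M \<in> carrier_mat n k"
  shows "rank M \<le> n"
proof -
  have "subspace class_ring (span (set (cols M))) V"
    using M cols_dim span_is_subspace by blast
  then show ?thesis
    unfolding rank_def using subspace_dim fin_dim fin_dim_span_cols[OF M] dim_is_n by simp
qed

lemma mrank_le_dim_row: "mrank M \<le> dim_row M"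
proof -
  have "M \<in> carrier_mat (dim_row M) (dim_col M)" by (rule carrier_matI) (rule refl)+
  then show ?thesis unfolding mrank_def by (rule vec_space.rank_le_nr)
qed

lemma self_scalar_prod_eq_0_iff:
  fixes v :: "real vec"
  assumes "v \<in> carrier_vec n"
  shows "v \<bullet> v = 0 \<longleftrightarrow> v = 0\<^sub>v n"
  using conjugate_square_eq_0_vec[OF assms] by (simp add: conjugate_vec_def)

lemma gram_quadratic_form:
  fixes M :: "'a :: comm_ring_1 mat"
  assumes M: "M \<in> carrier_mat r k" and v: "v \<in> carrier_vec r"
  shows "v \<bullet> ((M * M\<^sup>T) *\<^sub>v v) = (M\<^sup>T *\<^sub>v v) \<bullet> (M\<^sup>T *\<^sub>v v)"
  using M v by (simp add: transpose_vec_mult_scalar[OF M, of "M\<^sup>T *\<^sub>v v" v])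

lemma quadratic_form_minus:
  fixes X Y :: "'a :: comm_ring_1 mat"
  assumes X: "X \<in> carrier_mat r r" and Y: "Y \<in> carrier_mat r r" and v: "v \<in> carrier_vec r"
  shows "v \<bullet> ((X - Y) *\<^sub>v v) = v \<bullet> (X *\<^sub>v v) - v \<bullet> (Y *\<^sub>v v)"
  using X Y v by (simp add: minus_mult_distrib_mat_vec scalar_prod_minus_distrib)

lemma full_row_rank_if_transpose_injective:
  fixes S :: "real mat"
  assumes S: "S \<in> carrier_mat r k"
    and inj: "\<And>v. v \<in> carrier_vec r \<Longrightarrow> S\<^sup>T *\<^sub>v v = 0\<^sub>v k \<Longrightarrow> v = 0\<^sub>v r"
  shows "vec_space.rank r S = r"
proof -
  have St: "S\<^sup>T \<in> carrier_mat k r" using S by simp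
  have G: "S * S\<^sup>T \<in> carrier_mat r r" using S by simp
  have "det (S * S\<^sup>T) \<noteq> 0"
  proof
    assume "det (S * S\<^sup>T) = 0"
    then obtain v where v: "v \<in> carrier_vec r" "v \<noteq> 0\<^sub>v r" "(S * S\<^sup>T) *\<^sub>v v = 0\<^sub>v r"
      using det_0_iff_vec_prod_zero_field[OF G] by blast
    then have "(S\<^sup>T *\<^sub>v v) \<bullet> (S\<^sup>T *\<^sub>v v) = 0"
      using gram_quadratic_form[OF S v(1)] by simp
    then have "S\<^sup>T *\<^sub>v v = 0\<^sub>v k"
      using self_scalar_prod_eq_0_iff[of "S\<^sup>T *\<^sub>v v" k] St v(1) by simp
    with inj v show False by blast
  qed
  then have "vec_space.rank r (S * S\<^sup>T) = r" using vec_space.det_rank_iff[OF G] by simp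
  then show ?thesis
    using vec_space.rank_mult_le[OF S St] vec_space.rank_le_nr[OF S] by simp
qed

lemma transpose_injective_if_loewner_perturbation:
  fixes S D Q :: "real mat"
  assumes S: "S \<in> carrier_mat r k" and D: "D \<in> carrier_mat r k"
    and le: "loewner_le (D * D\<^sup>T) Q" and gt: "loewner_gt ((S + D) * (S + D)\<^sup>T) Q"
    and v: "v \<in> carrier_vec r" and Sv: "S\<^sup>T *\<^sub>v v = 0\<^sub>v k"
  shows "v = 0\<^sub>v r"
proof (rule ccontr)
  assume "v \<noteq> 0\<^sub>v r"
  let ?P = "(S + D) * (S + D)\<^sup>T"
  have SD: "S + D \<in> carrier_mat r k" using S D by simp
  have Q: "Q \<in> carrier_mat r r" using le D unfolding loewner_le_def by auto
  have "(S + D)\<^sup>T *\<^sub>v v = D\<^sup>T *\<^sub>v v"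
    using S D v Sv by (simp add: transpose_add add_mult_distrib_mat_vec)
  then have P_eq: "v \<bullet> (?P *\<^sub>v v) = v \<bullet> ((D * D\<^sup>T) *\<^sub>v v)"
    using gram_quadratic_form[OF SD v] gram_quadratic_form[OF D v] by simp
  have "0 < v \<bullet> ((?P - Q) *\<^sub>v v)"
    using gt v \<open>v \<noteq> 0\<^sub>v r\<close> Q unfolding loewner_gt_def pd_def by auto
  also have "\<dots> = v \<bullet> ((D * D\<^sup>T) *\<^sub>v v) - v \<bullet> (Q *\<^sub>v v)"
    using quadratic_form_minus[OF _ Q v, of ?P] SD P_eq by simp
  also have "\<dots> = - (v \<bullet> ((Q - D * D\<^sup>T) *\<^sub>v v))"
    using quadratic_form_minus[OF Q _ v, of "D * D\<^sup>T"] D by simp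
  also have "\<dots> \<le> 0"
    using le v Q unfolding loewner_le_def psd_def by auto
  finally show False by simp
qed

lemma full_row_rank_if_loewner_perturbation:
  fixes S D Q :: "real mat"
  assumes S: "S \<in> carrier_mat r k" and D: "D \<in> carrier_mat r k"
    and le: "loewner_le (D * D\<^sup>T) Q" and gt: "loewner_gt ((S + D) * (S + D)\<^sup>T) Q"
  shows "vec_space.rank r S = r"
  using full_row_rank_if_transpose_injective[OF S] transpose_injective_if_loewner_perturbation[OF S D le gt]
  by blast

lemma quadratic_form_block22:
  fixes X :: "real mat"
  assumes X: "X \<in> carrier_mat (p + r) (p + r)" and v: "v \<in> carrier_vec r"
  shows "(0\<^sub>v p @\<^sub>v v) \<bullet> (X *\<^sub>v (0\<^sub>v p @\<^sub>v v)) = v \<bullet> (block22 p X *\<^sub>v v)"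
proof -
  obtain X1 X2 X3 X4 where split: "split_block X p p = (X1, X2, X3, X4)"
    by (cases "split_block X p p") auto
  have blocks: "X1 \<in> carrier_mat p p" "X2 \<in> carrier_mat p r" "X3 \<in> carrier_mat r p"
      "X4 \<in> carrier_mat r r" "X = four_block_mat X1 X2 X3 X4"
    using split_block[OF split, of r r] X by auto
  have "(0\<^sub>v p @\<^sub>v v) \<bullet> (X *\<^sub>v (0\<^sub>v p @\<^sub>v v))
      = (0\<^sub>v p @\<^sub>v v) \<bullet> ((X1 *\<^sub>v 0\<^sub>v p + X2 *\<^sub>v v) @\<^sub>v (X3 *\<^sub>v 0\<^sub>v p + X4 *\<^sub>v v))"
    using blocks v by (subst blocks(5)) (simp add: four_block_mat_mult_vec)
  also have "X3 *\<^sub>v 0\<^sub>v p = 0\<^sub>v r"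
    using blocks(3) by (intro eq_vecI) auto
  also have "(0\<^sub>v p @\<^sub>v v) \<bullet> ((X1 *\<^sub>v 0\<^sub>v p + X2 *\<^sub>v v) @\<^sub>v (0\<^sub>v r + X4 *\<^sub>v v)) = v \<bullet> (X4 *\<^sub>v v)"
    using blocks v by (subst scalar_prod_append[of _ p _ r]) auto
  also have "X4 = block22 p X"
    using split X unfolding split_block_def block22_def by auto
  finally show ?thesis .
qed

lemma psd_block22:
  fixes X :: "real mat"
  assumes X: "X \<in> carrier_mat (p + r) (p + r)" and psd: "psd X"
  shows "psd (block22 p X)"
  unfolding psd_def
proof (intro conjI ballI)
  show "dim_row (block22 p X) = dim_col (block22 p X)" using X by (simp add: block22_def)
  fix v :: "real vec" assume "v \<in> carrier_vec (dim_row (block22 p X))"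
  then have v: "v \<in> carrier_vec r" using X by (simp add: block22_def)
  have "0 \<le> (0\<^sub>v p @\<^sub>v v) \<bullet> (X *\<^sub>v (0\<^sub>v p @\<^sub>v v))" using psd X v unfolding psd_def by auto
  then show "0 \<le> v \<bullet> (block22 p X *\<^sub>v v)" using quadratic_form_block22[OF X v] by simp
qed

lemma block22_minus:
  fixes X Y :: "real mat"
  assumes "X \<in> carrier_mat (p + r) (p + r)" and "Y \<in> carrier_mat (p + r) (p + r)"
  shows "block22 p (X - Y) = block22 p X - block22 p Y"
  using assms by (auto simp: block22_def)

lemma block22_gram:
  fixes N L :: "real mat"
  assumes N: "N \<in> carrier_mat (p + r) k" and L: "L \<in> carrier_mat r k"
    and lower: "\<And>i j. i < r \<Longrightarrow> j < k \<Longrightarrow> N $$ (p + i, j) = L $$ (i, j)"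
  shows "block22 p (N * N\<^sup>T) = L * L\<^sup>T"
proof (rule eq_matI)
  fix i j assume "i < dim_row (L * L\<^sup>T)" "j < dim_col (L * L\<^sup>T)"
  then have ij: "i < r" "j < r" using L by auto
  then have "row N (i + p) = row L i" "row N (j + p) = row L j"
    using N L lower by (auto simp: add.commute)
  then show "block22 p (N * N\<^sup>T) $$ (i, j) = (L * L\<^sup>T) $$ (i, j)"
    using N L ij by (simp add: block22_def)
qed (use N L in \<open>auto simp: block22_def\<close>)

lemma loewner_le_block22:
  fixes N L Th :: "real mat"
  assumes Th: "Th \<in> carrier_mat (p + r) (p + r)"
    and N: "N \<in> carrier_mat (p + r) k" and L: "L \<in> carrier_mat r k"
    and lower: "\<And>i j. i < r \<Longrightarrow> j < k \<Longrightarrow> N $$ (p + i, j) = L $$ (i, j)"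
    and le: "loewner_le (N * N\<^sup>T) Th"
  shows "loewner_le (L * L\<^sup>T) (block22 p Th)"
proof -
  have "psd (block22 p (Th - N * N\<^sup>T))"
    using le Th N by (intro psd_block22[of _ p r]) (auto simp: loewner_le_def)
  then have "psd (block22 p Th - L * L\<^sup>T)"
    using block22_minus[OF Th, of "N * N\<^sup>T"] block22_gram[OF N L lower] N by simp
  then show ?thesis using Th L unfolding loewner_le_def by (simp add: block22_def)
qed

lemma pow_mat_Suc_left:
  assumes A: "A \<in> carrier_mat n n"
  shows "A ^\<^sub>m Suc q = A * A ^\<^sub>m q"
proof (induction q)
  case (Suc q)
  have "A ^\<^sub>m Suc (Suc q) = (A * A ^\<^sub>m q) * A" using Suc by simp
  also have "\<dots> = A * A ^\<^sub>m Suc q" using A by (simp add: assoc_mult_mat[of _ n n _ n])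
  finally show ?case .
qed (use A in simp)

definition stacked_window :: "nat \<Rightarrow> nat \<Rightarrow> (nat \<Rightarrow> real vec) \<Rightarrow> nat \<Rightarrow> real vec" where
  "stacked_window p l w j = vec (p * l) (\<lambda>i. w (j + i div p) $ (i mod p))"

lemma stacked_window_carrier [simp]:
  "dim_vec (stacked_window p l w j) = p * l" "stacked_window p l w j \<in> carrier_vec (p * l)"
  by (simp_all add: stacked_window_def)

lemma stacked_window_add:
  assumes "\<And>q. q < l \<Longrightarrow> w' (j + q) \<in> carrier_vec p"
  shows "stacked_window p l (\<lambda>k. w k + w' k) j = stacked_window p l w j + stacked_window p l w' j"
proof (rule eq_vecI)
  fix i assume "i < dim_vec (stacked_window p l w j + stacked_window p l w' j)"
  then have i: "i < p * l" by (simp add: stacked_window_def)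
  moreover have "0 < p" using i by (cases p) auto
  ultimately have q: "i div p < l" and "i mod p < p"
    by (auto simp: div_less_iff_less_mult mult.commute)
  then show "stacked_window p l (\<lambda>k. w k + w' k) j $ i = (stacked_window p l w j + stacked_window p l w' j) $ i"
    using assms[OF q] i by (simp add: stacked_window_def)
qed simp

lemma data_mat_carrier: "data_mat p m l T y u \<in> carrier_mat (p * l + m * l) (T - l + 1)"
  by (simp add: data_mat_def)

lemma col_data_mat:
  assumes "j < T - l + 1"
  shows "col (data_mat p m l T y u) j = stacked_window p l y j @\<^sub>v stacked_window m l u j"
  using assms by (intro eq_vecI) (auto simp: data_mat_def stacked_window_def)

lemma data_mat_add:
  assumes lT: "l \<le> T"
    and dy: "\<And>k. k \<le> T \<Longrightarrow> dy k \<in> carrier_vec p" and du: "\<And>k. k \<le> T \<Longrightarrow> du k \<in> carrier_vec m"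
  shows "data_mat p m l T (\<lambda>k. y k + dy k) (\<lambda>k. u k + du k) = data_mat p m l T y u + data_mat p m l T dy du"
proof (rule mat_col_eqI)
  fix j assume "j < dim_col (data_mat p m l T y u + data_mat p m l T dy du)"
  then have j: "j < T - l + 1" by (simp add: data_mat_def)
  then have "stacked_window p l (\<lambda>k. y k + dy k) j = stacked_window p l y j + stacked_window p l dy j"
    "stacked_window m l (\<lambda>k. u k + du k) j = stacked_window m l u j + stacked_window m l du j"
    using lT dy du by (auto intro!: stacked_window_add)
  moreover note data_mat_carrier[of p m l T y u] data_mat_carrier[of p m l T dy du]
  ultimately show "col (data_mat p m l T (\<lambda>k. y k + dy k) (\<lambda>k. u k + du k)) j
      = col (data_mat p m l T y u + data_mat p m l T dy du) j"
    using j append_vec_add[of "stacked_window p l y j" "p * l" "stacked_window p l dy j"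
        "stacked_window m l u j" "m * l" "stacked_window m l du j"]
    by (simp add: col_data_mat)
qed (auto simp: data_mat_def)

lemma loewner_le_block22_noise_mat:
  assumes Th: "Th \<in> carrier_mat (p + p * l + m * l) (p + p * l + m * l)"
    and noise: "loewner_le (noise_mat p m l T dy du * (noise_mat p m l T dy du)\<^sup>T) Th"
  shows "loewner_le (data_mat p m l T dy du * (data_mat p m l T dy du)\<^sup>T) (block22 p Th)"
proof (rule loewner_le_block22[OF _ _ data_mat_carrier _ noise])
  show "Th \<in> carrier_mat (p + (p * l + m * l)) (p + (p * l + m * l))"
    using Th by (simp add: add.assoc)
  show "noise_mat p m l T dy du \<in> carrier_mat (p + (p * l + m * l)) (T - l + 1)"
    by (simp add: noise_mat_def add.assoc)
  show "noise_mat p m l T dy du $$ (p + i, j) = data_mat p m l T dy du $$ (i, j)"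
    if "i < p * l + m * l" "j < T - l + 1" for i j
    using that by (simp add: noise_mat_def data_mat_def)
qed

definition block_selector :: "nat \<Rightarrow> nat \<Rightarrow> nat \<Rightarrow> real mat" where
  "block_selector m l q = mat m (m * l) (\<lambda>(s, c). if c = q * m + s then 1 else 0)"

lemma block_selector_stacked_window:
  assumes q: "q < l" and w: "w (j + q) \<in> carrier_vec m"
  shows "block_selector m l q *\<^sub>v stacked_window m l w j = w (j + q)"
proof (rule eq_vecI)
  fix s assume "s < dim_vec (w (j + q))"
  then have s: "s < m" using w by simp
  have "q * m + s < (q + 1) * m" using s by simp
  also have "\<dots> \<le> m * l" using q by (metis Suc_eq_plus1 Suc_leI mult.commute mult_le_mono2)
  finally have qs: "q * m + s < m * l" .
  have "(block_selector m l q *\<^sub>v stacked_window m l w j) $ s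
      = (\<Sum>c = 0..<m * l. (if c = q * m + s then 1 else 0) * stacked_window m l w j $ c)"
    using s by (simp add: block_selector_def mult_mat_vec_def scalar_prod_def)
  also have "\<dots> = (\<Sum>c = 0..<m * l. if c = q * m + s then stacked_window m l w j $ c else 0)"
    by (intro sum.cong) auto
  also have "\<dots> = stacked_window m l w j $ (q * m + s)"
    using qs by simp
  also have "\<dots> = w (j + q) $ s" using qs s by (simp add: stacked_window_def)
  finally show "(block_selector m l q *\<^sub>v stacked_window m l w j) $ s = w (j + q) $ s" .
qed (use w in \<open>simp add: block_selector_def\<close>)

(* input_to_state A B l q maps the stacked inputs u(j), ..., u(j+l-1) to
   sum_{i<q} A^(q-1-i) B u(j+i), the input-driven part of x(j+q). *)
primrec input_to_state :: "real mat \<Rightarrow> real mat \<Rightarrow> nat \<Rightarrow> nat \<Rightarrow> real mat" where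
  "input_to_state A B l 0 = 0\<^sub>m (dim_row A) (dim_col B * l)"
| "input_to_state A B l (Suc q) = A * input_to_state A B l q + B * block_selector (dim_col B) l q"

lemma input_to_state_carrier:
  assumes "A \<in> carrier_mat n n" and "B \<in> carrier_mat n m"
  shows "input_to_state A B l q \<in> carrier_mat n (m * l)"
  using assms by (induction q) (auto simp: block_selector_def)

definition markov_toeplitz :: "real mat \<Rightarrow> real mat \<Rightarrow> real mat \<Rightarrow> nat \<Rightarrow> real mat" where
  "markov_toeplitz A B C l = mat (dim_row C * l) (dim_col B * l)
     (\<lambda>(i, c). (C * input_to_state A B l (i div dim_row C)) $$ (i mod dim_row C, c))"

lemma mult_mat_vec_block_rows:
  assumes i: "i < p * l" and F: "F (i div p) \<in> carrier_mat p k"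
  shows "(mat (p * l) k (\<lambda>(i, c). F (i div p) $$ (i mod p, c)) *\<^sub>v v) $ i = (F (i div p) *\<^sub>v v) $ (i mod p)"
proof -
  have "0 < p" using i by (cases p) auto
  then have "row (mat (p * l) k (\<lambda>(i, c). F (i div p) $$ (i mod p, c))) i = row (F (i div p)) (i mod p)"
    using i F by auto
  then show ?thesis using i F \<open>0 < p\<close> by simp
qed

lemma obs_mat_carrier:
  assumes "A \<in> carrier_mat n n" and "C \<in> carrier_mat p n"
  shows "obs_mat A C l \<in> carrier_mat (p * l) n"
  using assms by (simp add: obs_mat_def)

lemma markov_toeplitz_carrier:
  assumes "B \<in> carrier_mat n m" and "C \<in> carrier_mat p n"
  shows "markov_toeplitz A B C l \<in> carrier_mat (p * l) (m * l)"
  using assms by (simp add: markov_toeplitz_def)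

definition window_map :: "real mat \<Rightarrow> real mat \<Rightarrow> real mat \<Rightarrow> nat \<Rightarrow> real mat" where
  "window_map A B C l = four_block_mat (obs_mat A C l) (markov_toeplitz A B C l)
     (0\<^sub>m (dim_col B * l) (dim_col A)) (1\<^sub>m (dim_col B * l))"

lemma window_map_carrier:
  assumes "A \<in> carrier_mat n n" and "B \<in> carrier_mat n m" and "C \<in> carrier_mat p n"
  shows "window_map A B C l \<in> carrier_mat (p * l + m * l) (n + m * l)"
  using assms four_block_carrier_mat[OF obs_mat_carrier[OF assms(1,3)], of "1\<^sub>m (m * l)"]
  by (simp add: window_map_def)

locale lti_trajectory =
  fixes A B C :: "real mat" and n m p T :: nat and x u y :: "nat \<Rightarrow> real vec"
  assumes A: "A \<in> carrier_mat n n" and B: "B \<in> carrier_mat n m" and C: "C \<in> carrier_mat p n"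
    and x_dim: "\<And>k. k \<le> T + 1 \<Longrightarrow> x k \<in> carrier_vec n"
    and u_dim: "\<And>k. k \<le> T \<Longrightarrow> u k \<in> carrier_vec m"
    and dyn: "\<And>k. k \<le> T \<Longrightarrow> x (k + 1) = A *\<^sub>v x k + B *\<^sub>v u k"
    and out: "\<And>k. k \<le> T \<Longrightarrow> y k = C *\<^sub>v x k"
begin

lemma state_from_window:
  assumes jl: "j + l \<le> T" and q: "q \<le> l"
  shows "x (j + q) = A ^\<^sub>m q *\<^sub>v x j + input_to_state A B l q *\<^sub>v stacked_window m l u j"
  using q
proof (induction q)
  case 0
  have "0\<^sub>m n (m * l) *\<^sub>v stacked_window m l u j = 0\<^sub>v n" by (intro eq_vecI) auto
  then show ?case using A B x_dim[of j] jl by simp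
next
  case (Suc q)
  let ?U = "stacked_window m l u j" and ?K = "input_to_state A B l q" and ?E = "block_selector m l q"
  have K: "?K \<in> carrier_mat n (m * l)" using input_to_state_carrier[OF A B] .
  have E: "?E \<in> carrier_mat m (m * l)" by (simp add: block_selector_def)
  have xj: "x j \<in> carrier_vec n" using x_dim jl by simp
  have Ax: "A ^\<^sub>m q *\<^sub>v x j \<in> carrier_vec n" by (rule mult_mat_vec_carrier[OF pow_carrier_mat[OF A] xj])
  have KU: "?K *\<^sub>v ?U \<in> carrier_vec n" and EU: "?E *\<^sub>v ?U \<in> carrier_vec m" using K E by simp_all
  have "x (j + Suc q) = A *\<^sub>v x (j + q) + B *\<^sub>v u (j + q)" using dyn[of "j + q"] jl Suc.prems by simp
  also have "\<dots> = A *\<^sub>v (A ^\<^sub>m q *\<^sub>v x j + ?K *\<^sub>v ?U) + B *\<^sub>v (?E *\<^sub>v ?U)"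
    using Suc u_dim jl by (simp add: block_selector_stacked_window)
  also have "\<dots> = A *\<^sub>v (A ^\<^sub>m q *\<^sub>v x j) + (A *\<^sub>v (?K *\<^sub>v ?U) + B *\<^sub>v (?E *\<^sub>v ?U))"
    using A B Ax KU EU by (simp add: mult_add_distrib_mat_vec[OF A Ax KU] assoc_add_vec[of _ n])
  also have "\<dots> = (A * A ^\<^sub>m q) *\<^sub>v x j + (A * ?K + B * ?E) *\<^sub>v ?U"
    using A B K E xj
    by (simp add: add_mult_distrib_mat_vec[of _ n "m * l"] assoc_mult_mat_vec[of _ n _ _ "m * l"]
        assoc_mult_mat_vec[of A n n _ n])
  also have "\<dots> = A ^\<^sub>m Suc q *\<^sub>v x j + input_to_state A B l (Suc q) *\<^sub>v ?U"
    using carrier_matD[OF B] by (simp add: pow_mat_Suc_left[OF A, symmetric])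
  finally show ?case .
qed

lemma output_window:
  assumes jl: "j + l \<le> T"
  shows "stacked_window p l y j
    = obs_mat A C l *\<^sub>v x j + markov_toeplitz A B C l *\<^sub>v stacked_window m l u j"
proof (rule eq_vecI)
  fix i assume "i < dim_vec (obs_mat A C l *\<^sub>v x j + markov_toeplitz A B C l *\<^sub>v stacked_window m l u j)"
  then have i: "i < p * l" using C by (simp add: markov_toeplitz_def)
  define q r where "q = i div p" and "r = i mod p"
  have "0 < p" using i by (cases p) auto
  then have q: "q < l" and r: "r < p" using i by (auto simp: q_def r_def div_less_iff_less_mult mult.commute)
  let ?U = "stacked_window m l u j" and ?K = "input_to_state A B l q"
  have K: "?K \<in> carrier_mat n (m * l)" using input_to_state_carrier[OF A B] .
  have xj: "x j \<in> carrier_vec n" using x_dim jl by simp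
  have Ax: "A ^\<^sub>m q *\<^sub>v x j \<in> carrier_vec n" by (rule mult_mat_vec_carrier[OF pow_carrier_mat[OF A] xj])
  have KU: "?K *\<^sub>v ?U \<in> carrier_vec n" using K by simp
  have "obs_mat A C l = mat (p * l) n (\<lambda>(i, c). (C * A ^\<^sub>m (i div p)) $$ (i mod p, c))"
    using A C by (simp add: obs_mat_def)
  then have O: "(obs_mat A C l *\<^sub>v x j) $ i = ((C * A ^\<^sub>m q) *\<^sub>v x j) $ r"
    using mult_mat_vec_block_rows[OF i, of "\<lambda>q. C * A ^\<^sub>m q" n] A C by (simp add: q_def r_def)
  have "markov_toeplitz A B C l = mat (p * l) (m * l) (\<lambda>(i, c). (C * input_to_state A B l (i div p)) $$ (i mod p, c))"
    using B C by (simp add: markov_toeplitz_def)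
  then have M: "(markov_toeplitz A B C l *\<^sub>v ?U) $ i = ((C * ?K) *\<^sub>v ?U) $ r"
    using mult_mat_vec_block_rows[OF i, of "\<lambda>q. C * input_to_state A B l q" "m * l"] C K
    by (simp add: q_def r_def)
  have "y (j + q) = C *\<^sub>v x (j + q)" using out jl q by simp
  also have "\<dots> = C *\<^sub>v (A ^\<^sub>m q *\<^sub>v x j + ?K *\<^sub>v ?U)" using state_from_window[OF jl] q by simp
  also have "\<dots> = (C * A ^\<^sub>m q) *\<^sub>v x j + (C * ?K) *\<^sub>v ?U"
    using A C K xj by (simp add: mult_add_distrib_mat_vec[OF C Ax KU] assoc_mult_mat_vec[of _ p n _ n]
        assoc_mult_mat_vec[of _ p n _ "m * l"])
  finally have "y (j + q) $ r = ((C * A ^\<^sub>m q) *\<^sub>v x j) $ r + ((C * ?K) *\<^sub>v ?U) $ r"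
    using A C K xj r by simp
  then show "stacked_window p l y j $ i
      = (obs_mat A C l *\<^sub>v x j + markov_toeplitz A B C l *\<^sub>v stacked_window m l u j) $ i"
    using O M i C by (simp add: stacked_window_def markov_toeplitz_def q_def r_def)
qed (use C in \<open>simp add: markov_toeplitz_def\<close>)

lemma window_map_mult_vec:
  assumes jl: "j + l \<le> T"
  shows "window_map A B C l *\<^sub>v (x j @\<^sub>v stacked_window m l u j)
    = stacked_window p l y j @\<^sub>v stacked_window m l u j"
proof -
  have xj: "x j \<in> carrier_vec n" using x_dim jl by simp
  have "window_map A B C l *\<^sub>v (x j @\<^sub>v stacked_window m l u j)
      = (obs_mat A C l *\<^sub>v x j + markov_toeplitz A B C l *\<^sub>v stacked_window m l u j)
        @\<^sub>v (0\<^sub>m (m * l) n *\<^sub>v x j + 1\<^sub>m (m * l) *\<^sub>v stacked_window m l u j)"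
    unfolding window_map_def carrier_matD(2)[OF A] carrier_matD(2)[OF B]
    by (rule four_block_mat_mult_vec) (use A B C xj in \<open>auto intro: obs_mat_carrier markov_toeplitz_carrier\<close>)
  also have "0\<^sub>m (m * l) n *\<^sub>v x j = 0\<^sub>v (m * l)" by (intro eq_vecI) (use xj in auto)
  finally show ?thesis using output_window[OF jl] by simp
qed

lemma data_mat_factorization:
  assumes lT: "l \<le> T"
  shows "data_mat p m l T y u = window_map A B C l
      * mat_of_cols (n + m * l) (map (\<lambda>j. x j @\<^sub>v stacked_window m l u j) [0..<T - l + 1])"
    (is "_ = ?M * ?N")
proof (rule mat_col_eqI)
  have M: "?M \<in> carrier_mat (p * l + m * l) (n + m * l)" using window_map_carrier[OF A B C] .
  have N: "?N \<in> carrier_mat (n + m * l) (T - l + 1)" by (intro carrier_matI) (simp_all del: upt_Suc)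
  fix j assume "j < dim_col (?M * ?N)"
  then have j: "j < T - l + 1" using N by simp
  then have jl: "j + l \<le> T" using lT by simp
  have "col (?M * ?N) j = ?M *\<^sub>v (x j @\<^sub>v stacked_window m l u j)"
    using col_mult2[OF M N j] col_mat_of_cols[of j _ "n + m * l"] j x_dim[of j] jl by (simp del: upt_Suc)
  then show "col (data_mat p m l T y u) j = col (?M * ?N) j"
    using window_map_mult_vec[OF jl] col_data_mat[OF j] by simp
qed (use window_map_carrier[OF A B C, of l] in \<open>simp_all add: data_mat_def del: upt_Suc\<close>)

lemma mrank_data_mat_le:
  assumes "l \<le> T"
  shows "mrank (data_mat p m l T y u) \<le> n + m * l"
proof -
  let ?N = "mat_of_cols (n + m * l) (map (\<lambda>j. x j @\<^sub>v stacked_window m l u j) [0..<T - l + 1])"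
  have M: "window_map A B C l \<in> carrier_mat (p * l + m * l) (n + m * l)"
    using window_map_carrier[OF A B C] .
  have N: "?N \<in> carrier_mat (n + m * l) (T - l + 1)" by (intro carrier_matI) (simp_all del: upt_Suc)
  have "mrank (data_mat p m l T y u) = vec_space.rank (p * l + m * l) (data_mat p m l T y u)"
    by (simp add: mrank_def data_mat_def)
  also have "\<dots> = vec_space.rank (p * l + m * l) (window_map A B C l * ?N)"
    by (subst data_mat_factorization[OF assms]) (rule refl)
  also have "\<dots> \<le> vec_space.rank (p * l + m * l) (window_map A B C l)"
    by (rule vec_space.rank_mult_le[OF M N])
  also have "\<dots> \<le> n + m * l" by (rule vec_space.rank_le_nc[OF M])
  finally show ?thesis .
qed

end

lemma mrank_obs_mat_obs_index:
  assumes "observable A C" and "A \<in> carrier_mat n n"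
  shows "mrank (obs_mat A C (obs_index A C)) = n"
proof -
  have "mrank (obs_mat A C (obs_index A C)) = dim_row A"
    unfolding obs_index_def by (rule LeastI) (use assms(1) in \<open>simp add: observable_def\<close>)
  then show ?thesis using assms(2) by simp
qed

theorem lemma9:
  fixes A B C Th :: "real mat" and n m p T :: nat
    and x u y du dy :: "nat \<Rightarrow> real vec"
  assumes A: "A \<in> carrier_mat n n" and B: "B \<in> carrier_mat n m" and C: "C \<in> carrier_mat p n"
    and obs: "observable A C"
    and T: "T \<ge> obs_index A C"
    and x_dim: "\<And>k. k \<le> T + 1 \<Longrightarrow> x k \<in> carrier_vec n"
    and u_dim: "\<And>k. k \<le> T \<Longrightarrow> u k \<in> carrier_vec m"
    and du_dim: "\<And>k. k \<le> T \<Longrightarrow> du k \<in> carrier_vec m"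
    and dy_dim: "\<And>k. k \<le> T \<Longrightarrow> dy k \<in> carrier_vec p"
    and dyn: "\<And>k. k \<le> T \<Longrightarrow> x (k + 1) = A *\<^sub>v x k + B *\<^sub>v u k"
    and out: "\<And>k. k \<le> T \<Longrightarrow> y k = C *\<^sub>v x k"
    and Th: "Th \<in> carrier_mat (p + p * obs_index A C + m * obs_index A C) (p + p * obs_index A C + m * obs_index A C)"
    and Th_sym: "transpose_mat Th = Th" and Th_psd: "psd Th"
    and noise: "loewner_le (noise_mat p m (obs_index A C) T dy du * transpose_mat (noise_mat p m (obs_index A C) T dy du)) Th"
  shows "(let l = obs_index A C;
              Psi0 = data_mat p m l T (\<lambda>k. y k + dy k) (\<lambda>k. u k + du k);
              S0 = data_mat p m l T y u
          in (loewner_gt (Psi0 * transpose_mat Psi0) (block22 p Th) \<longrightarrow> mrank S0 = (p + m) * l)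
           \<and> (mrank S0 = (p + m) * l \<longrightarrow> mrank (obs_mat A C l) = p * l)
           \<and> (mrank (obs_mat A C l) = p * l \<longrightarrow> p * l = n))"
proof -
  interpret lti_trajectory A B C n m p T x u y
    using A B C x_dim u_dim dyn out by unfold_locales
  define l where "l = obs_index A C"
  define S0 where "S0 = data_mat p m l T y u"
  define D where "D = data_mat p m l T dy du"
  have lT: "l \<le> T" using T unfolding l_def .
  have rank_O: "mrank (obs_mat A C l) = n" unfolding l_def by (rule mrank_obs_mat_obs_index[OF obs A])
  have "mrank (obs_mat A C l) \<le> p * l"
    using mrank_le_dim_row[of "obs_mat A C l"] carrier_matD(1)[OF obs_mat_carrier[OF A C]] by simp
  moreover have "mrank S0 \<le> n + m * l" unfolding S0_def by (rule mrank_data_mat_le[OF lT])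
  moreover have "mrank S0 = (p + m) * l"
    if gt: "loewner_gt ((S0 + D) * (S0 + D)\<^sup>T) (block22 p Th)"
  proof -
    have carriers: "S0 \<in> carrier_mat (p * l + m * l) (T - l + 1)" "D \<in> carrier_mat (p * l + m * l) (T - l + 1)"
      unfolding S0_def D_def by (rule data_mat_carrier)+
    have "loewner_le (D * D\<^sup>T) (block22 p Th)"
      unfolding D_def l_def by (rule loewner_le_block22_noise_mat[OF Th noise])
    then have "vec_space.rank (p * l + m * l) S0 = p * l + m * l"
      by (rule full_row_rank_if_loewner_perturbation[OF carriers _ gt])
    then show ?thesis by (simp add: mrank_def S0_def data_mat_def algebra_simps)
  qed
  moreover have "data_mat p m l T (\<lambda>k. y k + dy k) (\<lambda>k. u k + du k) = S0 + D"
    unfolding S0_def D_def by (rule data_mat_add[OF lT dy_dim du_dim])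
  ultimately show ?thesis
    unfolding Let_def l_def[symmetric] S0_def[symmetric] using rank_O by (auto simp: algebra_simps)
qed

end
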